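(* The functions $F(n)=\sum_{j=1}^n\frac{(-1)^{j-1}}{j}$, $L(n)=\sum_{j=1}^n\frac{(-1)^{j-1}}{2j-1}$ and $S(n)=\sum_{j=1}^n\frac{1}{j!}$ of the positive integer variable $n$ are transcendental functions in $n$ over $\overline{\mathbb{Q}}$.
   Context: $\overline{\mathbb{Q}}\subseteq\mathbb{C}$ denotes the field of algebraic numbers. A function $f(n)$ of the positive integer variable $n$ is an algebraic function over a subfield $K\subseteq\mathbb{C}$ if there exist polynomials $q_0,\dots,q_k\in K[n]$ with $q_k\neq 0$ such that $q_k(n)f(n)^k+\cdots+q_1(n)f(n)+q_0(n)=0$ for all positive integers $n$; otherwise $f$ is a transcendental function over $K$. *)

theory Defs
  imports "HOL-Computational_Algebra.Polynomial" "HOL-Analysis.Analysis"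
begin

definition alg_numbers :: "complex set" where
  "alg_numbers = {z. algebraic z}"

definition poly_over :: "complex set \<Rightarrow> complex poly \<Rightarrow> bool" where
  "poly_over K p \<longleftrightarrow> (\<forall>i. coeff p i \<in> K)"

definition algebraic_function_over :: "complex set \<Rightarrow> (nat \<Rightarrow> complex) \<Rightarrow> bool" where
  "algebraic_function_over K f \<longleftrightarrow>
     (\<exists>k::nat. \<exists>q::nat \<Rightarrow> complex poly.
        (\<forall>i\<le>k. poly_over K (q i)) \<and> q k \<noteq> 0 \<and>
        (\<forall>n::nat. n \<ge> 1 \<longrightarrow> (\<Sum>i\<le>k. poly (q i) (of_nat n) * f n ^ i) = 0))"

definition transcendental_function_over :: "complex set \<Rightarrow> (nat \<Rightarrow> complex) \<Rightarrow> bool" where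
  "transcendental_function_over K f \<longleftrightarrow> \<not> algebraic_function_over K f"

definition F_fun :: "nat \<Rightarrow> real" where
  "F_fun n = (\<Sum>j=1..n. (-1) ^ (j - 1) / real j)"

definition L_fun :: "nat \<Rightarrow> real" where
  "L_fun n = (\<Sum>j=1..n. (-1) ^ (j - 1) / (2 * real j - 1))"

definition S_fun :: "nat \<Rightarrow> real" where
  "S_fun n = (\<Sum>j=1..n. 1 / fact j)"

end

theory Submission
  imports Defs "HOL-Number_Theory.Cong"
begin

text \<open>All three sequences are rational-valued, so the coefficient field plays no role: applying
  a \<open>\<rat>\<close>-linear functional \<open>\<complex> \<rightarrow> \<rat>\<close> that is \<open>1\<close> on the top coefficient and clearing
  denominators turns an algebraic relation into one with integer polynomials \<open>Q\<^sub>0, \<dots>, Q\<^sub>k\<close>,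
  \<open>Q\<^sub>k \<noteq> 0\<close>. Fix \<open>t\<close> with \<open>Q\<^sub>k(t) \<noteq> 0\<close>. For every large prime \<open>p\<close> the value \<open>g(p + t)\<close>
  has \<open>p\<close> in its denominator: for \<open>F\<close> and \<open>L\<close> exactly one term has a denominator divisible
  by \<open>p\<close>, namely \<open>p\<close> itself, and for \<open>S\<close> the terms \<open>1/j!\<close> with \<open>p \<le> j \<le> p + t\<close> combine to
  a fraction with numerator prime to \<open>p\<close>. As for the rational root theorem, \<open>p\<close> then divides
  the top coefficient \<open>Q\<^sub>k(p + t) \<equiv> Q\<^sub>k(t) (mod p)\<close>, which is impossible once \<open>p > |Q\<^sub>k(t)|\<close>.\<close>

lemma rat_linear_functional_exists:
  fixes z :: "'a::field_char_0"
  assumes "z \<noteq> 0"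
  obtains \<phi> :: "'a \<Rightarrow> rat"
  where "Vector_Spaces.linear (\<lambda>q w. of_rat q * w) (*) \<phi>" "\<phi> z = 1"
proof -
  interpret vector_space_pair "\<lambda>q (w::'a). of_rat q * w" "(*) :: rat \<Rightarrow> rat \<Rightarrow> rat"
    by unfold_locales (auto simp: algebra_simps of_rat_add of_rat_mult)
  have "vs1.independent {z}"
    using assms by (simp add: vs1.independent_insert)
  from linear_independent_extend[OF this, of "\<lambda>_. 1"] that show thesis by auto
qed

lemma poly_of_rat_linear:
  assumes "Vector_Spaces.linear (\<lambda>q w. of_rat q * w) (*) \<phi>"
  shows "\<phi> (poly p (of_rat x)) = poly (map_poly \<phi> p) x"
proof -
  interpret \<phi>: Vector_Spaces.linear "\<lambda>q w. of_rat q * w" "(*)" \<phi> by fact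
  show ?thesis
    by (induction p) (simp_all add: map_poly_pCons \<phi>.add \<phi>.scale mult.commute)
qed

lemma poly_map_poly_of_int: "poly (map_poly of_int P) (of_int x) = of_int (poly P x)"
  by (induction P) (simp_all add: map_poly_pCons)

lemma poly_cong:
  fixes P :: "'a::{comm_ring_1,unique_euclidean_semiring} poly"
  assumes "[x = y] (mod m)"
  shows "[poly P x = poly P y] (mod m)"
  by (induction P) (simp_all add: cong_add cong_mult assms)

lemma common_denominator:
  fixes A :: "rat set"
  assumes "finite A"
  obtains M :: int where "M \<noteq> 0" "\<And>x. x \<in> A \<Longrightarrow> of_int M * x \<in> \<int>"
proof
  define den where "den x = snd (quotient_of x)" for x
  show "(\<Prod>x\<in>A. den x) \<noteq> 0"
    using assms quotient_of_denom_pos' by (auto simp: den_def) (metis less_irrefl)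
  fix x assume "x \<in> A"
  then have "(\<Prod>y\<in>A. den y) = den x * (\<Prod>y\<in>A - {x}. den y)"
    using assms by (simp add: prod.remove)
  moreover have "of_int (den x) * x = of_int (fst (quotient_of x))"
  proof (cases "quotient_of x")
    case (Pair n d)
    then show ?thesis
      using quotient_of_denom_pos[OF Pair] quotient_of_div[OF Pair] by (simp add: den_def)
  qed
  ultimately have
    "of_int (\<Prod>y\<in>A. den y) * x = of_int ((\<Prod>y\<in>A - {x}. den y) * fst (quotient_of x))"
    by (simp add: algebra_simps)
  then show "of_int (\<Prod>y\<in>A. den y) * x \<in> \<int>"
    by (metis Ints_of_int)
qed

lemma int_polys_scaling_rat_polys:
  fixes P :: "'i \<Rightarrow> rat poly"
  assumes "finite I"
  obtains M :: int and Q :: "'i \<Rightarrow> int poly"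
  where "M \<noteq> 0" "\<And>i. i \<in> I \<Longrightarrow> map_poly of_int (Q i) = smult (of_int M) (P i)"
proof -
  obtain M :: int
    where M: "M \<noteq> 0" "\<And>x. x \<in> (\<Union>i\<in>I. set (coeffs (P i))) \<Longrightarrow> of_int M * x \<in> \<int>"
    using common_denominator[of "\<Union>i\<in>I. set (coeffs (P i))"] assms by blast
  define Q where "Q i = map_poly (\<lambda>x. \<lfloor>of_int M * x\<rfloor>) (P i)" for i
  have "map_poly of_int (Q i) = smult (of_int M) (P i)" if "i \<in> I" for i
  proof -
    have "map_poly of_int (Q i) = map_poly (\<lambda>x. of_int \<lfloor>of_int M * x\<rfloor>) (P i)"
      by (simp add: Q_def map_poly_map_poly o_def)
    also have "\<dots> = map_poly (\<lambda>x. of_int M * x) (P i)"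
      using M(2) that by (intro map_poly_cong) (auto elim!: Ints_cases)
    finally show ?thesis by (simp add: smult_conv_map_poly)
  qed
  with M(1) that show thesis by blast
qed

lemma integer_relation_if_algebraic_function:
  fixes g :: "nat \<Rightarrow> rat"
  assumes "algebraic_function_over K (\<lambda>n. of_rat (g n))"
  obtains Q k where "Q k \<noteq> 0"
    "\<And>n. n \<ge> 1 \<Longrightarrow> (\<Sum>i\<le>k. of_int (poly (Q i) (int n)) * g n ^ i) = 0"
proof -
  obtain k and q :: "nat \<Rightarrow> complex poly" where "q k \<noteq> 0"
    and rel: "\<And>n. n \<ge> 1 \<Longrightarrow> (\<Sum>i\<le>k. poly (q i) (of_nat n) * of_rat (g n) ^ i) = 0"
    using assms unfolding algebraic_function_over_def by blast
  obtain \<phi> where lin: "Vector_Spaces.linear (\<lambda>q w. of_rat q * w) (*) \<phi>"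
    and \<phi>_lead: "\<phi> (lead_coeff (q k)) = 1"
    using rat_linear_functional_exists[of "lead_coeff (q k)"] \<open>q k \<noteq> 0\<close> by auto
  interpret \<phi>: Vector_Spaces.linear "\<lambda>q w. of_rat q * w" "(*)" \<phi> by (fact lin)
  define P where "P i = map_poly \<phi> (q i)" for i
  have "coeff (P k) (degree (q k)) = 1"
    using \<phi>_lead by (simp add: P_def coeff_map_poly)
  then have "P k \<noteq> 0" by auto
  obtain M Q where "M \<noteq> 0"
    and Q: "\<And>i. i \<le> k \<Longrightarrow> map_poly of_int (Q i) = smult (of_int M) (P i)"
    using int_polys_scaling_rat_polys[of "{..k}" P] by auto
  have "Q k \<noteq> 0"
    using Q[of k] \<open>P k \<noteq> 0\<close> \<open>M \<noteq> 0\<close> by auto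
  moreover have "(\<Sum>i\<le>k. of_int (poly (Q i) (int n)) * g n ^ i) = 0" if "n \<ge> 1" for n
  proof -
    have "(\<Sum>i\<le>k. of_int (poly (Q i) (int n)) * g n ^ i) =
        of_int M * (\<Sum>i\<le>k. poly (P i) (of_nat n) * g n ^ i)"
      unfolding sum_distrib_left
    proof (intro sum.cong refl)
      fix i assume "i \<in> {..k}"
      then have "of_int (poly (Q i) (int n)) = poly (map_poly of_int (Q i)) (of_int (int n))"
        by (simp only: poly_map_poly_of_int)
      also have "\<dots> = of_int M * poly (P i) (of_nat n)"
        using Q \<open>i \<in> {..k}\<close> by simp
      finally show
        "of_int (poly (Q i) (int n)) * g n ^ i = of_int M * (poly (P i) (of_nat n) * g n ^ i)"
        by simp
    qed
    also have "(\<Sum>i\<le>k. poly (P i) (of_nat n) * g n ^ i) =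
        \<phi> (\<Sum>i\<le>k. poly (q i) (of_nat n) * of_rat (g n) ^ i)"
      using \<phi>.scale
      by (simp add: \<phi>.sum P_def mult.commute flip: poly_of_rat_linear[OF lin] of_rat_power)
    finally show ?thesis
      using rel[OF that] by simp
  qed
  ultimately show thesis using that by blast
qed

text \<open>For a prime \<open>p\<close> these say \<open>v\<^sub>p(y) \<ge> 0\<close> and \<open>v\<^sub>p(y) < 0\<close>.\<close>

definition p_integral :: "int \<Rightarrow> rat \<Rightarrow> bool" where
  "p_integral p y \<longleftrightarrow> (\<exists>A D. \<not> p dvd D \<and> y = of_int A / of_int D)"

definition p_nonintegral :: "int \<Rightarrow> rat \<Rightarrow> bool" where
  "p_nonintegral p y \<longleftrightarrow> (\<exists>A D. D \<noteq> 0 \<and> p dvd D \<and> \<not> p dvd A \<and> y = of_int A / of_int D)"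

lemma p_integral_add:
  assumes "prime p" "p_integral p x" "p_integral p y"
  shows "p_integral p (x + y)"
proof -
  obtain A D B E
    where "\<not> p dvd D" "x = of_int A / of_int D" "\<not> p dvd E" "y = of_int B / of_int E"
    using assms(2,3) unfolding p_integral_def by blast
  moreover from this have "D \<noteq> 0" "E \<noteq> 0" by auto
  ultimately have "\<not> p dvd D * E" "x + y = of_int (A * E + B * D) / of_int (D * E)"
    using assms(1) by (auto simp: prime_dvd_mult_iff field_simps)
  then show ?thesis unfolding p_integral_def by blast
qed

lemma p_integral_0:
  assumes "prime p"
  shows "p_integral p 0"
proof -
  have "\<not> p dvd 1"
    using assms not_prime_unit by blast
  then show ?thesis
    unfolding p_integral_def by (intro exI[of _ 0] exI[of _ 1]) simp
qed

lemma p_integral_sum: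
  assumes "prime p" "\<And>j. j \<in> J \<Longrightarrow> p_integral p (f j)"
  shows "p_integral p (sum f J)"
  using assms(2)
  by (induction J rule: infinite_finite_induct) (simp_all add: p_integral_0 p_integral_add assms(1))

lemma p_nonintegral_add:
  assumes "prime p" "p_nonintegral p x" "p_integral p y"
  shows "p_nonintegral p (x + y)"
proof -
  obtain A D B E where "D \<noteq> 0" "p dvd D" "\<not> p dvd A" "x = of_int A / of_int D"
    and "\<not> p dvd E" "y = of_int B / of_int E"
    using assms(2,3) unfolding p_integral_def p_nonintegral_def by blast
  moreover from this have "E \<noteq> 0" by auto
  moreover have "\<not> p dvd A * E + B * D"
    using assms(1) \<open>p dvd D\<close> \<open>\<not> p dvd A\<close> \<open>\<not> p dvd E\<close>
    by (simp add: dvd_add_left_iff prime_dvd_mult_iff)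
  ultimately have "D * E \<noteq> 0" "p dvd D * E" "\<not> p dvd A * E + B * D"
    "x + y = of_int (A * E + B * D) / of_int (D * E)"
    by (auto simp: field_simps)
  then show ?thesis unfolding p_nonintegral_def by blast
qed

lemma p_nonintegral_sum_remove:
  assumes "prime p" "finite J" "a \<in> J" "p_nonintegral p (f a)"
    "\<And>j. j \<in> J - {a} \<Longrightarrow> p_integral p (f j)"
  shows "p_nonintegral p (sum f J)"
proof -
  have "sum f J = f a + sum f (J - {a})"
    using assms(2,3) by (rule sum.remove)
  then show ?thesis
    using p_nonintegral_add[OF assms(1,4) p_integral_sum[OF assms(1), of "J - {a}" f]] assms(5)
    by simp
qed

lemma p_nonintegral_signed_sum:
  fixes d :: "'a \<Rightarrow> int" and e :: "'a \<Rightarrow> nat"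
  assumes "prime p" "finite J" "a \<in> J" "d a = p" "\<And>j. j \<in> J - {a} \<Longrightarrow> \<not> p dvd d j"
  shows "p_nonintegral p (\<Sum>j\<in>J. (-1) ^ e j / of_int (d j))"
proof (rule p_nonintegral_sum_remove[OF assms(1-3)])
  have "\<not> p dvd (-1) ^ e a"
    using assms(1) by (metis dvd_minus_iff prime_dvd_power_int not_prime_unit)
  then show "p_nonintegral p ((-1) ^ e a / of_int (d a))"
    using assms(1,4) unfolding p_nonintegral_def by (intro exI[of _ "(-1) ^ e a"] exI[of _ p]) auto
next
  fix j assume "j \<in> J - {a}"
  then show "p_integral p ((-1) ^ e j / of_int (d j))"
    using assms(5) unfolding p_integral_def by (intro exI[of _ "(-1) ^ e j"] exI[of _ "d j"]) simp
qed

lemma prime_dvd_top_coeff_if_p_nonintegral_root: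
  assumes "prime p" "p_nonintegral p y" "(\<Sum>i\<le>k. of_int (c i) * y ^ i) = 0"
  shows "p dvd c k"
proof -
  obtain A D where "D \<noteq> 0" "p dvd D" "\<not> p dvd A" and y: "y = of_int A / of_int D"
    using assms(2) unfolding p_nonintegral_def by blast
  have "of_int (\<Sum>i\<le>k. c i * A ^ i * D ^ (k - i)) =
      (\<Sum>i\<le>k. of_int (c i) * y ^ i) * of_int D ^ k"
    unfolding sum_distrib_right of_int_sum
  proof (intro sum.cong refl)
    fix i assume "i \<in> {..k}"
    then have "(of_int D :: rat) ^ k = of_int D ^ i * of_int D ^ (k - i)"
      by (simp flip: power_add)
    then show "of_int (c i * A ^ i * D ^ (k - i)) = of_int (c i) * y ^ i * of_int D ^ k"
      using \<open>D \<noteq> 0\<close> by (simp add: y power_divide)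
  qed
  then have "(of_int (\<Sum>i\<le>k. c i * A ^ i * D ^ (k - i)) :: rat) = 0"
    using assms(3) by (simp only: mult_zero_left)
  then have "(\<Sum>i\<le>k. c i * A ^ i * D ^ (k - i)) = 0"
    by (simp only: of_int_eq_0_iff)
  then have "c k * A ^ k = - (\<Sum>i<k. c i * A ^ i * D ^ (k - i))"
    by (simp add: flip: lessThan_Suc_atMost add_eq_0_iff2)
  moreover have "p dvd (\<Sum>i<k. c i * A ^ i * D ^ (k - i))"
  proof (intro dvd_sum)
    fix i assume "i \<in> {..<k}"
    then have "D dvd D ^ (k - i)" by simp
    then show "p dvd c i * A ^ i * D ^ (k - i)"
      using \<open>p dvd D\<close> by (meson dvd_mult dvd_trans)
  qed
  ultimately have "p dvd c k * A ^ k" by simp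
  then show ?thesis
    using assms(1) \<open>\<not> p dvd A\<close> by (auto simp: prime_dvd_mult_iff dest: prime_dvd_power)
qed

lemma transcendental_if_eventually_p_nonintegral:
  fixes g :: "nat \<Rightarrow> rat"
  assumes "\<And>t. \<forall>\<^sub>F p in sequentially. prime p \<longrightarrow> p_nonintegral (int p) (g (p + t))"
  shows "transcendental_function_over K (\<lambda>n. of_rat (g n))"
  unfolding transcendental_function_over_def
proof
  assume "algebraic_function_over K (\<lambda>n. of_rat (g n))"
  then obtain Q k where "Q k \<noteq> 0"
    and rel: "\<And>n. n \<ge> 1 \<Longrightarrow> (\<Sum>i\<le>k. of_int (poly (Q i) (int n)) * g n ^ i) = 0"
    by (rule integer_relation_if_algebraic_function) blast
  have "finite {x. poly (Q k) x = 0}"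
    using \<open>Q k \<noteq> 0\<close> by (rule poly_roots_finite)
  moreover have "infinite (range int)"
    by (rule range_inj_infinite) (simp add: inj_on_def)
  ultimately obtain t where t: "poly (Q k) (int t) \<noteq> 0"
    using finite_subset[of "range int" "{x. poly (Q k) x = 0}"] by auto
  obtain B where B: "\<And>p. p \<ge> B \<Longrightarrow> prime p \<Longrightarrow> p_nonintegral (int p) (g (p + t))"
    using assms[of t] unfolding eventually_sequentially by blast
  obtain p where p: "prime p" "max B (nat \<bar>poly (Q k) (int t)\<bar>) < p"
    using bigger_prime by blast
  have "int p dvd poly (Q k) (int (p + t))"
  proof (rule prime_dvd_top_coeff_if_p_nonintegral_root
      [where c = "\<lambda>i. poly (Q i) (int (p + t))"])
    show "prime (int p)" using p(1) by (simp only: prime_nat_int_transfer)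
    show "p_nonintegral (int p) (g (p + t))" using B p by simp
    show "(\<Sum>i\<le>k. of_int (poly (Q i) (int (p + t))) * g (p + t) ^ i) = 0"
      using rel[of "p + t"] prime_gt_0_nat[OF p(1)] by simp
  qed
  moreover have "[poly (Q k) (int (p + t)) = poly (Q k) (int t)] (mod int p)"
    by (intro poly_cong) (simp add: cong_iff_dvd_diff)
  ultimately have "int p dvd poly (Q k) (int t)"
    by (simp add: cong_dvd_iff)
  then have "\<bar>int p\<bar> \<le> \<bar>poly (Q k) (int t)\<bar>"
    by (rule dvd_imp_le_int[OF t])
  with p(2) show False by linarith
qed

definition F_rat :: "nat \<Rightarrow> rat" where
  "F_rat n = (\<Sum>j=1..n. (-1) ^ (j - 1) / of_nat j)"

lemma of_real_F_fun: "complex_of_real (F_fun n) = of_rat (F_rat n)"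
  unfolding F_fun_def F_rat_def by (simp add: of_rat_sum of_rat_divide of_rat_power)

lemma F_rat_eventually_p_nonintegral:
  "\<forall>\<^sub>F p in sequentially. prime p \<longrightarrow> p_nonintegral (int p) (F_rat (p + t))"
  using eventually_gt_at_top[of t]
proof eventually_elim
  case (elim p)
  show ?case
  proof
    assume "prime p"
    have "F_rat (p + t) = (\<Sum>j=1..p + t. (-1) ^ (j - 1) / of_int (int j))"
      by (simp add: F_rat_def)
    also have "p_nonintegral (int p) \<dots>"
    proof (rule p_nonintegral_signed_sum)
      fix j assume j: "j \<in> {1..p + t} - {p}"
      show "\<not> int p dvd int j"
      proof
        assume "int p dvd int j"
        then obtain m where m: "j = p * m" by fastforce
        with j have "2 \<le> m" by (cases m) (auto simp: le_Suc_eq)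
        with m have "p * 2 \<le> j" by simp
        with j elim show False by simp
      qed
    qed (use \<open>prime p\<close> prime_ge_1_nat in auto)
    finally show "p_nonintegral (int p) (F_rat (p + t))" .
  qed
qed

definition L_rat :: "nat \<Rightarrow> rat" where
  "L_rat n = (\<Sum>j=1..n. (-1) ^ (j - 1) / (2 * of_nat j - 1))"

lemma of_real_L_fun: "complex_of_real (L_fun n) = of_rat (L_rat n)"
  unfolding L_fun_def L_rat_def
  by (simp add: of_rat_sum of_rat_divide of_rat_power of_rat_diff of_rat_mult)

lemma L_rat_eventually_p_nonintegral:
  "\<forall>\<^sub>F p in sequentially. prime p \<longrightarrow> p_nonintegral (int p) (L_rat (p + t))"
  using eventually_gt_at_top[of "2 * t + 2"]
proof eventually_elim
  case (elim p)
  show ?case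
  proof
    assume "prime p"
    then have "odd p"
      using elim by (intro prime_odd_nat) auto
    define a where "a = Suc p div 2"
    have a: "2 * int a - 1 = int p"
      using \<open>odd p\<close> by (auto simp: a_def elim!: oddE)
    have "L_rat (p + t) = (\<Sum>j=1..p + t. (-1) ^ (j - 1) / of_int (2 * int j - 1))"
      by (simp add: L_rat_def)
    also have "p_nonintegral (int p) \<dots>"
    proof (rule p_nonintegral_signed_sum[where a = a])
      fix j assume j: "j \<in> {1..p + t} - {a}"
      show "\<not> int p dvd 2 * int j - 1"
      proof
        assume "int p dvd 2 * int j - 1"
        then obtain m where m: "2 * int j - 1 = int p * m" by blast
        have "m \<noteq> 1" using m a j by auto
        moreover have "odd (int p * m)"
          using m[symmetric] by simp
        then have "odd m" by simp
        moreover have "0 < int p * m" "int p * m < int p * 3"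
          unfolding m[symmetric] using j elim by auto
        then have "0 < m" "m < 3"
          using prime_gt_0_nat[OF \<open>prime p\<close>] by (simp_all add: zero_less_mult_iff)
        ultimately show False by presburger
      qed
    qed (use \<open>prime p\<close> a in auto)
    finally show "p_nonintegral (int p) (L_rat (p + t))" .
  qed
qed

text \<open>Over the common denominator \<open>(p + t)!\<close> the numerator of this sum is
  \<open>\<Sum>i\<le>t. (p + t)!/(p + i)! \<equiv> \<Sum>i\<le>t. t!/i! (mod p)\<close>, which the bound keeps nonzero mod \<open>p\<close>.\<close>

lemma p_nonintegral_factorial_tail:
  assumes "prime p" "(\<Sum>i\<le>t. \<Prod>{Suc i..t}) < p"
  shows "p_nonintegral (int p) (\<Sum>i\<le>t. 1 / fact (p + i))"
proof -
  define N where "N = (\<Sum>i\<le>t. \<Prod>{Suc (p + i)..p + t})"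
  have "(\<Sum>i\<le>t. 1 / fact (p + i)) =
      (\<Sum>i\<le>t. of_nat (\<Prod>{Suc (p + i)..p + t}) / (fact (p + t) :: rat))"
  proof (intro sum.cong refl)
    fix i assume "i \<in> {..t}"
    then have "fact (p + t) = fact (p + i) * \<Prod>{Suc (p + i)..p + t}"
      by (intro fact_eq_fact_times) simp
    then have "(fact (p + t) :: rat) = fact (p + i) * of_nat (\<Prod>{Suc (p + i)..p + t})"
      by (metis of_nat_fact of_nat_mult)
    then show
      "1 / fact (p + i) = of_nat (\<Prod>{Suc (p + i)..p + t}) / (fact (p + t) :: rat)"
      by (simp add: field_simps)
  qed
  then have tail: "(\<Sum>i\<le>t. 1 / fact (p + i)) = of_nat N / (fact (p + t) :: rat)"
    by (simp add: N_def sum_divide_distrib)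
  have "[\<Prod>{Suc (p + i)..p + t} = \<Prod>{Suc i..t}] (mod p)" for i
  proof -
    have "\<Prod>{Suc (p + i)..p + t} = (\<Prod>m\<in>{Suc i..t}. m + p)"
      using prod.shift_bounds_cl_nat_ivl[of "\<lambda>m. m" "Suc i" p t] by (simp add: add.commute)
    also have "[\<dots> = (\<Prod>m\<in>{Suc i..t}. m)] (mod p)"
      by (intro cong_prod) (simp add: cong_def)
    finally show ?thesis by simp
  qed
  then have "[N = (\<Sum>i\<le>t. \<Prod>{Suc i..t})] (mod p)"
    unfolding N_def by (intro cong_sum) auto
  moreover have "0 < (\<Sum>i\<le>t. \<Prod>{Suc i..t})"
    by (intro sum_pos2[of _ t]) auto
  ultimately have "\<not> p dvd N"
    using assms(2) by (auto simp: cong_dvd_iff dest: dvd_imp_le)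
  moreover have "p dvd fact (p + t)"
    using assms(1) by (simp add: prime_dvd_fact_iff)
  ultimately have "p_nonintegral (int p) (of_int (int N) / of_int (int (fact (p + t))))"
    unfolding p_nonintegral_def
    by (intro exI[of _ "int N"] exI[of _ "int (fact (p + t))"] conjI) (simp_all del: of_nat_fact)
  then show ?thesis
    by (simp add: tail)
qed

lemma of_rat_fact: "of_rat (fact n) = fact n"
  by (metis of_nat_fact of_rat_of_nat_eq)

definition S_rat :: "nat \<Rightarrow> rat" where
  "S_rat n = (\<Sum>j=1..n. 1 / fact j)"

lemma of_real_S_fun: "complex_of_real (S_fun n) = of_rat (S_rat n)"
  unfolding S_fun_def S_rat_def by (simp add: of_rat_sum of_rat_divide of_rat_fact)

lemma S_rat_eventually_p_nonintegral:
  "\<forall>\<^sub>F p in sequentially. prime p \<longrightarrow> p_nonintegral (int p) (S_rat (p + t))"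
  using eventually_gt_at_top[of "\<Sum>i\<le>t. \<Prod>{Suc i..t}"]
proof eventually_elim
  case (elim p)
  show ?case
  proof
    assume "prime p"
    then have "prime (int p)" "0 < p" by (simp_all add: prime_gt_0_nat)
    have split: "{1..p + t} = {p..p + t} \<union> {1..<p}"
      using \<open>0 < p\<close> by auto
    have "(\<Sum>j=p..p + t. 1 / fact j) = (\<Sum>i\<le>t. 1 / fact (p + i) :: rat)"
      using sum.shift_bounds_cl_nat_ivl[of "\<lambda>j. 1 / fact j" 0 p t]
      by (simp add: atLeast0AtMost add.commute)
    then have "S_rat (p + t) = (\<Sum>i\<le>t. 1 / fact (p + i)) + (\<Sum>j\<in>{1..<p}. 1 / fact j)"
      unfolding S_rat_def split by (subst sum.union_disjoint) auto
    also have "p_nonintegral (int p) \<dots>"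
    proof (intro p_nonintegral_add p_integral_sum)
      show "p_nonintegral (int p) (\<Sum>i\<le>t. 1 / fact (p + i))"
        using \<open>prime p\<close> elim by (rule p_nonintegral_factorial_tail)
      fix j assume "j \<in> {1..<p}"
      then have "\<not> p dvd fact j"
        using \<open>prime p\<close> by (simp add: prime_dvd_fact_iff)
      then have "\<not> int p dvd fact j"
        by (metis int_dvd_int_iff of_nat_fact)
      then show "p_integral (int p) (1 / fact j)"
        unfolding p_integral_def by (intro exI[of _ 1] exI[of _ "fact j"]) simp
    qed fact+
    finally show "p_nonintegral (int p) (S_rat (p + t))" .
  qed
qed

theorem mainTheorem11:
  shows "transcendental_function_over alg_numbers (\<lambda>n. complex_of_real (F_fun n)) \<and>
         transcendental_function_over alg_numbers (\<lambda>n. complex_of_real (L_fun n)) \<and>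
         transcendental_function_over alg_numbers (\<lambda>n. complex_of_real (S_fun n))"
  unfolding of_real_F_fun of_real_L_fun of_real_S_fun
  by (intro conjI transcendental_if_eventually_p_nonintegral F_rat_eventually_p_nonintegral
      L_rat_eventually_p_nonintegral S_rat_eventually_p_nonintegral)

end
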